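(* For the stochastic energy exchange model of the context and a time step $h>0$, the time-$h$ sampling chain $\mathbf{E}_n=\mathbf{E}_{nh}$ is $\lambda$-irreducible, where $\lambda$ is Lebesgue measure on $\mathbb{R}^N_+$: for every measurable $A\subset\mathbb{R}^N_+$ with $\lambda(A)>0$ and every $\mathbf{E}_0\in\mathbb{R}^N_+$ there is $n\ge1$ with $P^{nh}(\mathbf{E}_0,A)>0$.
   Context: Fix $N\ge1$, $T_L,T_R>0$, a sufficiently large $K$ ($K\gg T_L,T_R$) and $R(a,b)=\min\{K,\sqrt{\min(a,b)}\}$. The stochastic energy exchange model is the Markov jump process $\mathbf{E}_t=(E_1(t),\dots,E_N(t))$ on $\mathbb{R}^N_+$: for $i=1,\dots,N-1$ a clock of rate $R(E_i,E_{i+1})$ on sites $i,i+1$; when it rings $(E_i,E_{i+1})\mapsto(p(E_i+E_{i+1}),(1-p)(E_i+E_{i+1}))$, $p$ uniform on $(0,1)$; a clock of rate $R(T_L,E_1)$ (resp. $R(E_N,T_R)$) with $E_1\mapsto p(E_1+X_L)$ (resp. $E_N\mapsto p(E_N+X_R)$), $X_L,X_R$ exponential with means $T_L,T_R$; all independent. $P^t$ is its transition kernel; $h>0$ is the fixed (sufficiently small) time step used in the paper. *)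

theory Defs
  imports "HOL-Probability.Probability"
begin

text \<open>Sites are indexed 0,...,N-1 (site i of the paper is index i-1).
  States are functions nat => real, extensional on {..<N}.\<close>

definition see_rate :: "real \<Rightarrow> real \<Rightarrow> real \<Rightarrow> real" where
  "see_rate K a b = min K (sqrt (min a b))"

definition see_space :: "nat \<Rightarrow> (nat \<Rightarrow> real) measure" where
  "see_space N = PiM {..<N} (\<lambda>_. lborel)"

definition see_orthant :: "nat \<Rightarrow> (nat \<Rightarrow> real) set" where
  "see_orthant N = PiE {..<N} (\<lambda>_. {0<..})"

definition unif01 :: "real measure" where
  "unif01 = uniform_measure lborel {0<..<1}"

definition expo :: "real \<Rightarrow> real measure" where
  "expo T = density lborel (exponential_density (1 / T))"

definition bond_move :: "nat \<Rightarrow> real \<Rightarrow> (nat \<Rightarrow> real) \<Rightarrow> (nat \<Rightarrow> real)" where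
  "bond_move i p x = x(i := p * (x i + x (Suc i)), Suc i := (1 - p) * (x i + x (Suc i)))"

definition left_move :: "real \<Rightarrow> real \<Rightarrow> (nat \<Rightarrow> real) \<Rightarrow> (nat \<Rightarrow> real)" where
  "left_move p X x = x(0 := p * (x 0 + X))"

definition right_move :: "nat \<Rightarrow> real \<Rightarrow> real \<Rightarrow> (nat \<Rightarrow> real) \<Rightarrow> (nat \<Rightarrow> real)" where
  "right_move N p X x = x(N - 1 := p * (x (N - 1) + X))"

definition total_rate :: "nat \<Rightarrow> real \<Rightarrow> real \<Rightarrow> real \<Rightarrow> (nat \<Rightarrow> real) \<Rightarrow> real" where
  "total_rate N K TL TR x =
     (\<Sum>i<N - 1. see_rate K (x i) (x (Suc i))) + see_rate K TL (x 0) + see_rate K (x (N - 1)) TR"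

definition jump_rate_kernel ::
  "nat \<Rightarrow> real \<Rightarrow> real \<Rightarrow> real \<Rightarrow> (nat \<Rightarrow> real) \<Rightarrow> (nat \<Rightarrow> real) set \<Rightarrow> ennreal" where
  "jump_rate_kernel N K TL TR x A =
     (\<Sum>i<N - 1. ennreal (see_rate K (x i) (x (Suc i))) * emeasure unif01 {p. bond_move i p x \<in> A})
     + ennreal (see_rate K TL (x 0)) * emeasure (unif01 \<Otimes>\<^sub>M expo TL) {(p, X). left_move p X x \<in> A}
     + ennreal (see_rate K (x (N - 1)) TR) * emeasure (unif01 \<Otimes>\<^sub>M expo TR) {(p, X). right_move N p X x \<in> A}"

text \<open>Uniformization constant: every rate is at most K and there are N+1 clocks.\<close>
definition unif_const :: "nat \<Rightarrow> real \<Rightarrow> real" where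
  "unif_const N K = real (N + 1) * K"

text \<open>One step of the uniformized chain: Q = I + G / Lambda.\<close>
definition unif_step ::
  "nat \<Rightarrow> real \<Rightarrow> real \<Rightarrow> real \<Rightarrow> (nat \<Rightarrow> real) \<Rightarrow> (nat \<Rightarrow> real) set \<Rightarrow> ennreal" where
  "unif_step N K TL TR x A =
     jump_rate_kernel N K TL TR x A / ennreal (unif_const N K)
     + ennreal (1 - total_rate N K TL TR x / unif_const N K) * indicator A x"

definition unif_step_measure ::
  "nat \<Rightarrow> real \<Rightarrow> real \<Rightarrow> real \<Rightarrow> (nat \<Rightarrow> real) \<Rightarrow> (nat \<Rightarrow> real) measure" where
  "unif_step_measure N K TL TR x =
     measure_of (space (see_space N)) (sets (see_space N)) (unif_step N K TL TR x)"

fun unif_iter ::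
  "nat \<Rightarrow> real \<Rightarrow> real \<Rightarrow> real \<Rightarrow> nat \<Rightarrow> (nat \<Rightarrow> real) \<Rightarrow> (nat \<Rightarrow> real) set \<Rightarrow> ennreal" where
  "unif_iter N K TL TR 0 x A = indicator A x"
| "unif_iter N K TL TR (Suc k) x A =
     (\<integral>\<^sup>+ y. unif_iter N K TL TR k y A \<partial>(unif_step_measure N K TL TR x))"

text \<open>Transition kernel P^t(x,A) of the (bounded-rate) Markov jump process,
  given by the uniformization formula
  P^t = sum_k exp(-Lambda t) (Lambda t)^k / k! Q^k.\<close>
definition see_kernel ::
  "nat \<Rightarrow> real \<Rightarrow> real \<Rightarrow> real \<Rightarrow> real \<Rightarrow> (nat \<Rightarrow> real) \<Rightarrow> (nat \<Rightarrow> real) set \<Rightarrow> ennreal" where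
  "see_kernel N K TL TR t x A =
     (\<Sum>k. ennreal (exp (- unif_const N K * t) * (unif_const N K * t) ^ k / fact k)
            * unif_iter N K TL TR k x A)"

end

theory Submission
  imports Defs
begin

text \<open>
  The time-\<open>t\<close> kernel is a Poisson mixture of the powers \<open>Q\<^sup>k\<close> of the uniformized one-step
  kernel, so it suffices to find one \<open>k\<close> with \<open>Q\<^sup>k(E\<^sub>0, A) > 0\<close>; and \<open>Q\<^sup>k\<close> dominates the
  contribution of any fixed sequence of \<open>k\<close> moves. We use \<open>N\<close> rounds, the round for site \<open>j\<close>
  setting the coordinate \<open>j\<close> without touching the sites left of it: the right reservoir injects
  a large energy at site \<open>N - 1\<close>, which is passed leftwards bond by bond, each bond keeping more
  than half of it, until the bond \<open>(j, j + 1)\<close> deposits at site \<open>j\<close> a value \<open>s\<close> for which the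
  section of \<open>A\<close> over the coordinates fixed so far still has positive Lebesgue measure. By
  Fubini these \<open>s\<close> form a set of positive measure, and since the splitting fraction is uniform
  and the reservoir energy exponential, every step succeeds with positive probability. After the
  last round the state lies in \<open>A\<close>.
\<close>

lemma countably_additive_add:
  assumes "countably_additive S f" and "countably_additive S g"
  shows "countably_additive S (\<lambda>A. f A + g A :: ennreal)"
  using assms by (auto simp: countably_additive_def suminf_add[OF summableI summableI, symmetric])

lemma countably_additive_sum:
  "finite I \<Longrightarrow> (\<And>i. i \<in> I \<Longrightarrow> countably_additive S (f i))
    \<Longrightarrow> countably_additive S (\<lambda>A. \<Sum>i\<in>I. f i A :: ennreal)"
proof (induction I rule: finite_induct)
  case (insert i I)
  then have "countably_additive S (\<lambda>A. f i A + (\<Sum>i\<in>I. f i A))"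
    by (intro countably_additive_add) auto
  with insert.hyps show ?case by simp
qed (simp add: countably_additive_def)

lemma countably_additive_cmult:
  "countably_additive S f \<Longrightarrow> countably_additive S (\<lambda>A. (c::ennreal) * f A)"
  by (auto simp: countably_additive_def)

lemma countably_additive_divide:
  "countably_additive S f \<Longrightarrow> countably_additive S (\<lambda>A. f A / (c::ennreal))"
  by (auto simp: countably_additive_def)

lemma countably_additive_emeasure: "sets M = S \<Longrightarrow> countably_additive S (emeasure M)"
  by (auto simp: countably_additive_def suminf_emeasure)

lemma countably_additive_cong:
  assumes "countably_additive S f" and "\<And>A. A \<in> S \<Longrightarrow> f A = g A"
  shows "countably_additive S g"
  unfolding countably_additive_def
proof (intro allI impI)
  fix A :: "nat \<Rightarrow> _" assume A: "range A \<subseteq> S" "disjoint_family A" "\<Union> (range A) \<in> S"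
  then have "(\<Sum>i. g (A i)) = (\<Sum>i. f (A i))" using assms(2) by (metis range_subsetD)
  with A assms show "(\<Sum>i. g (A i)) = g (\<Union> (range A))" by (simp add: countably_additive_def)
qed

lemma nn_integral_scaled_le:
  assumes sets: "sets M = sets M'" and le: "\<And>A. A \<in> sets M \<Longrightarrow> c * emeasure M A \<le> emeasure M' A"
    and G: "G \<in> borel_measurable M"
  shows "c * (\<integral>\<^sup>+y. G y \<partial>M) \<le> (\<integral>\<^sup>+y. G y \<partial>M')"
proof -
  have "scale_measure c M \<le> M'"
    unfolding le_measure_iff
  proof (simp add: sets sets_eq_imp_space_eq[OF sets] space_scale_measure le_fun_def, intro allI)
    fix A show "c * emeasure M A \<le> emeasure M' A"
      using le by (cases "A \<in> sets M") (simp_all add: emeasure_notin_sets sets)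
  qed
  then have "nn_integral (scale_measure c M) G \<le> nn_integral M' G"
    using sets by (intro nn_integral_mono_measure) simp_all
  then show ?thesis using G by (simp add: nn_integral_scale_measure)
qed

lemma nn_integral_pos_of_pos_on:
  assumes u: "u \<in> borel_measurable M" and E: "E \<in> sets M" "0 < emeasure M E"
    and pos: "\<And>x. x \<in> E \<Longrightarrow> 0 < u x"
  shows "0 < (\<integral>\<^sup>+x. u x \<partial>M)"
proof (rule ccontr)
  assume "\<not> 0 < (\<integral>\<^sup>+x. u x \<partial>M)"
  then have "emeasure M {x\<in>space M. u x \<noteq> 0} = 0"
    using nn_integral_0_iff[OF u] by simp
  moreover have "E \<subseteq> {x\<in>space M. u x \<noteq> 0}"
    using pos sets.sets_into_space[OF E(1)] by force
  ultimately show False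
    using E emeasure_mono[of E "{x\<in>space M. u x \<noteq> 0}" M] u by simp
qed

lemma emeasure_scaled_hit_pos:
  fixes U M :: real
  assumes T: "T \<in> sets borel" and pos: "0 < emeasure lborel (T \<inter> {0<..<M})" and MU: "M \<le> U"
  shows "0 < emeasure lborel {p \<in> {0<..<1}. p * U \<in> T}"
proof -
  have "0 < M" using pos by (cases "0 < M") auto
  with MU have U: "0 < U" by simp
  let ?S = "T \<inter> {0<..<U}"
  have "emeasure lborel (T \<inter> {0<..<M}) \<le> emeasure lborel ?S"
    using T MU by (intro emeasure_mono) auto
  also have "\<dots> = (\<integral>\<^sup>+x. indicator ?S x \<partial>lborel)"
    using T by simp
  also have "\<dots> = ennreal \<bar>U\<bar> * (\<integral>\<^sup>+p. indicator ?S (0 + U * p) \<partial>lborel)"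
    using T U by (intro nn_integral_real_affine) simp_all
  also have "(\<lambda>p. indicator ?S (0 + U * p) :: ennreal) = indicator {p \<in> {0<..<1}. p * U \<in> T}"
    using U by (auto simp: indicator_def fun_eq_iff mult.commute zero_less_mult_iff)
  finally have "0 < ennreal \<bar>U\<bar> * (\<integral>\<^sup>+p. indicator {p \<in> {0<..<1}. p * U \<in> T} p \<partial>lborel)"
    by (rule less_le_trans[OF pos])
  moreover have "{p \<in> {0<..<1}. p * U \<in> T} \<in> sets borel"
    using T by measurable
  ultimately show ?thesis by (simp add: ennreal_zero_less_mult_iff)
qed

lemma exists_bounded_part_pos:
  fixes B :: "real set"
  assumes B: "B \<in> sets borel" "B \<subseteq> {0<..}" and pos: "0 < emeasure lborel B"
  shows "\<exists>M>0. 0 < emeasure lborel (B \<inter> {0<..<M})"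
proof (rule ccontr)
  assume "\<not> ?thesis"
  then have null: "emeasure lborel (B \<inter> {0<..<real (Suc n)}) = 0" for n
    using not_gr_zero by fastforce
  have "B \<subseteq> (\<Union>n. B \<inter> {0<..<real (Suc n)})"
  proof
    fix x assume "x \<in> B"
    moreover obtain n :: nat where "x < real n" using reals_Archimedean2 by blast
    ultimately show "x \<in> (\<Union>n. B \<inter> {0<..<real (Suc n)})" using B(2) by (intro UN_I[of n]) auto
  qed
  then have "B = (\<Union>n. B \<inter> {0<..<real (Suc n)})" by blast
  also have "emeasure lborel \<dots> = 0"
    using null B by (intro emeasure_UN_eq_0) auto
  finally show False using pos by simp
qed

lemma space_see_space: "space (see_space N) = PiE {..<N} (\<lambda>_. UNIV)"
  by (simp add: see_space_def space_PiM)

lemma sets_unif01 [simp, measurable_cong]: "sets unif01 = sets borel"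
  by (simp add: unif01_def)

lemma space_unif01 [simp]: "space unif01 = UNIV"
  by (simp add: unif01_def)

lemma sets_expo [simp, measurable_cong]: "sets (expo T) = sets borel"
  by (simp add: expo_def)

lemma space_expo [simp]: "space (expo T) = UNIV"
  by (simp add: expo_def)

lemma space_unif01_expo [simp]: "space (unif01 \<Otimes>\<^sub>M expo T) = UNIV"
  by (simp add: space_pair_measure)

lemma sets_unif01_expo [simp]: "sets (unif01 \<Otimes>\<^sub>M expo T) = sets (borel \<Otimes>\<^sub>M borel)"
  by (rule sets_pair_measure_cong) simp_all

lemma prob_space_unif01: "prob_space unif01"
  unfolding unif01_def by (rule prob_space_uniform_measure) simp_all

lemma prob_space_unif01_expo: "0 < T \<Longrightarrow> prob_space (unif01 \<Otimes>\<^sub>M expo T)"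
proof -
  assume "0 < T"
  then interpret E: prob_space "expo T"
    unfolding expo_def by (intro prob_space_exponential_density) simp
  interpret U: prob_space unif01 by (rule prob_space_unif01)
  interpret P: pair_prob_space unif01 "expo T" ..
  show ?thesis by (rule P.prob_space_axioms)
qed

lemma measurable_component_see_space:
  "k < N \<Longrightarrow> (\<lambda>x. x k) \<in> borel_measurable (see_space N)"
proof -
  assume "k < N"
  then have "(\<lambda>x. x k) \<in> measurable (PiM {..<N} (\<lambda>_. lborel)) lborel"
    by (intro measurable_component_singleton) simp
  then show ?thesis by (simp add: see_space_def)
qed

lemma measurable_into_see_space:
  assumes "\<And>k. k < N \<Longrightarrow> (\<lambda>\<omega>. f \<omega> k) \<in> borel_measurable M"
    and "\<And>\<omega> k. \<omega> \<in> space M \<Longrightarrow> N \<le> k \<Longrightarrow> f \<omega> k = undefined"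
  shows "f \<in> measurable M (see_space N)"
  unfolding see_space_def
  by (rule measurable_PiM_single') (use assms in \<open>auto simp: PiE_def extensional_def\<close>)

lemma measurable_see_space_fst_component:
  "k < N \<Longrightarrow> (\<lambda>\<omega>. fst \<omega> k) \<in> borel_measurable (see_space N \<Otimes>\<^sub>M M)"
  by (rule measurable_compose[OF measurable_fst measurable_component_see_space])

lemma measurable_bond_move:
  assumes "Suc i < N"
  shows "(\<lambda>(x, p). bond_move i p x) \<in> measurable (see_space N \<Otimes>\<^sub>M borel) (see_space N)"
proof (rule measurable_into_see_space)
  fix k assume "k < N"
  note [measurable] = measurable_see_space_fst_component[of i N borel]
    measurable_see_space_fst_component[of "Suc i" N borel]
    measurable_see_space_fst_component[OF \<open>k < N\<close>, of borel]
  show "(\<lambda>\<omega>. (case \<omega> of (x, p) \<Rightarrow> bond_move i p x) k) \<in> borel_measurable (see_space N \<Otimes>\<^sub>M borel)"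
    using assms by (cases "k = Suc i"; cases "k = i") (simp_all add: bond_move_def case_prod_beta')
qed (use assms in \<open>auto simp: bond_move_def space_pair_measure space_see_space PiE_def extensional_def\<close>)

lemma measurable_reservoir_move:
  assumes "k < N"
  shows "(\<lambda>(x, w). x(k := fst w * (x k + snd w)))
    \<in> measurable (see_space N \<Otimes>\<^sub>M (borel \<Otimes>\<^sub>M borel)) (see_space N)"
proof (rule measurable_into_see_space)
  fix j assume "j < N"
  note [measurable] = measurable_see_space_fst_component[OF assms, of "borel \<Otimes>\<^sub>M borel"]
    measurable_see_space_fst_component[OF \<open>j < N\<close>, of "borel \<Otimes>\<^sub>M borel"]
  show "(\<lambda>\<omega>. (case \<omega> of (x, w) \<Rightarrow> x(k := fst w * (x k + snd w))) j)
    \<in> borel_measurable (see_space N \<Otimes>\<^sub>M (borel \<Otimes>\<^sub>M borel))"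
    by (simp add: case_prod_beta')
qed (use assms in \<open>auto simp: space_pair_measure space_see_space PiE_def extensional_def\<close>)

lemma measurable_bond_move_slice:
  "Suc i < N \<Longrightarrow> x \<in> space (see_space N) \<Longrightarrow> (\<lambda>p. bond_move i p x) \<in> measurable unif01 (see_space N)"
  using measurable_compose[OF measurable_Pair1' measurable_bond_move, of x N i]
  by (simp cong: measurable_cong_sets)

lemma measurable_left_move_slice:
  assumes "0 < N" and "x \<in> space (see_space N)"
  shows "(\<lambda>w. left_move (fst w) (snd w) x) \<in> measurable (unif01 \<Otimes>\<^sub>M expo T) (see_space N)"
  using measurable_compose[OF measurable_Pair1' measurable_reservoir_move, of x N 0] assms
  by (simp add: left_move_def cong: measurable_cong_sets)

lemma measurable_right_move_slice:
  assumes "0 < N" and "x \<in> space (see_space N)"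
  shows "(\<lambda>w. right_move N (fst w) (snd w) x) \<in> measurable (unif01 \<Otimes>\<^sub>M expo T) (see_space N)"
  using measurable_compose[OF measurable_Pair1' measurable_reservoir_move, of x N "N - 1"] assms
  by (simp add: right_move_def cong: measurable_cong_sets)

lemma measurable_see_rate:
  "i < N \<Longrightarrow> j < N \<Longrightarrow> (\<lambda>x. ennreal (see_rate K (x i) (x j)) / c) \<in> borel_measurable (see_space N)"
  unfolding see_rate_def using measurable_component_see_space[of i N] measurable_component_see_space[of j N]
  by measurable

lemma measurable_see_rate_right:
  "i < N \<Longrightarrow> (\<lambda>x. ennreal (see_rate K (x i) T) / c) \<in> borel_measurable (see_space N)"
  unfolding see_rate_def using measurable_component_see_space[of i N] by measurable

lemma mem_see_orthant_iff:
  "z \<in> see_orthant N \<longleftrightarrow> (\<forall>i<N. 0 < z i) \<and> (\<forall>i\<ge>N. z i = undefined)"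
  by (auto simp: see_orthant_def PiE_def extensional_def Pi_def)

lemma see_orthant_subset_space: "see_orthant N \<subseteq> space (see_space N)"
  by (auto simp: mem_see_orthant_iff space_see_space PiE_def extensional_def)

lemma bond_move_in_see_orthant:
  "z \<in> see_orthant N \<Longrightarrow> Suc i < N \<Longrightarrow> 0 < p \<Longrightarrow> p < 1 \<Longrightarrow> bond_move i p z \<in> see_orthant N"
  unfolding mem_see_orthant_iff bond_move_def by (auto intro!: mult_pos_pos add_pos_pos)

lemma right_move_in_see_orthant:
  "z \<in> see_orthant N \<Longrightarrow> 0 < N \<Longrightarrow> 0 < p \<Longrightarrow> p < 1 \<Longrightarrow> 0 \<le> X \<Longrightarrow> right_move N p X z \<in> see_orthant N"
  unfolding mem_see_orthant_iff right_move_def by (auto intro!: mult_pos_pos add_pos_nonneg)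

lemma see_rate_ratio_pos: "0 < K \<Longrightarrow> 0 < a \<Longrightarrow> 0 < b \<Longrightarrow> 0 < ennreal (see_rate K a b) / ennreal c"
  unfolding see_rate_def by (simp add: ennreal_zero_less_divide)

section \<open>The one-step kernel of the uniformized chain\<close>

definition bond_law :: "nat \<Rightarrow> nat \<Rightarrow> (nat \<Rightarrow> real) \<Rightarrow> (nat \<Rightarrow> real) measure" where
  "bond_law N i x = distr unif01 (see_space N) (\<lambda>p. bond_move i p x)"

definition left_law :: "nat \<Rightarrow> real \<Rightarrow> (nat \<Rightarrow> real) \<Rightarrow> (nat \<Rightarrow> real) measure" where
  "left_law N T x = distr (unif01 \<Otimes>\<^sub>M expo T) (see_space N) (\<lambda>w. left_move (fst w) (snd w) x)"

definition right_law :: "nat \<Rightarrow> real \<Rightarrow> (nat \<Rightarrow> real) \<Rightarrow> (nat \<Rightarrow> real) measure" where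
  "right_law N T x = distr (unif01 \<Otimes>\<^sub>M expo T) (see_space N) (\<lambda>w. right_move N (fst w) (snd w) x)"

lemma emeasure_bond_law:
  assumes "Suc i < N" and "x \<in> space (see_space N)" and "A \<in> sets (see_space N)"
  shows "emeasure (bond_law N i x) A = emeasure unif01 {p. bond_move i p x \<in> A}"
  unfolding bond_law_def using assms
  by (subst emeasure_distr[OF measurable_bond_move_slice]) (auto intro!: arg_cong[where f="emeasure _"])

lemma emeasure_left_law:
  assumes "0 < N" and "x \<in> space (see_space N)" and "A \<in> sets (see_space N)"
  shows "emeasure (left_law N T x) A = emeasure (unif01 \<Otimes>\<^sub>M expo T) {(p, X). left_move p X x \<in> A}"
  unfolding left_law_def using assms
  by (subst emeasure_distr[OF measurable_left_move_slice]) (auto intro!: arg_cong[where f="emeasure _"])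

lemma emeasure_right_law:
  assumes "0 < N" and "x \<in> space (see_space N)" and "A \<in> sets (see_space N)"
  shows "emeasure (right_law N T x) A = emeasure (unif01 \<Otimes>\<^sub>M expo T) {(p, X). right_move N p X x \<in> A}"
  unfolding right_law_def using assms
  by (subst emeasure_distr[OF measurable_right_move_slice]) (auto intro!: arg_cong[where f="emeasure _"])

lemma unif_step_eq:
  assumes N: "0 < N" and x: "x \<in> space (see_space N)" and A: "A \<in> sets (see_space N)"
  shows "unif_step N K TL TR x A =
    ((\<Sum>i<N - 1. ennreal (see_rate K (x i) (x (Suc i))) * emeasure (bond_law N i x) A)
     + ennreal (see_rate K TL (x 0)) * emeasure (left_law N TL x) A
     + ennreal (see_rate K (x (N - 1)) TR) * emeasure (right_law N TR x) A) / ennreal (unif_const N K)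
    + ennreal (1 - total_rate N K TL TR x / unif_const N K) * emeasure (return (see_space N) x) A"
proof -
  have "(\<Sum>i<N - 1. ennreal (see_rate K (x i) (x (Suc i))) * emeasure unif01 {p. bond_move i p x \<in> A})
      = (\<Sum>i<N - 1. ennreal (see_rate K (x i) (x (Suc i))) * emeasure (bond_law N i x) A)"
    using x A by (intro sum.cong) (simp_all add: emeasure_bond_law)
  then show ?thesis
    using assms by (simp add: unif_step_def jump_rate_kernel_def emeasure_left_law emeasure_right_law)
qed

lemma sets_unif_step_measure [simp, measurable_cong]:
  "sets (unif_step_measure N K TL TR x) = sets (see_space N)"
  by (simp add: unif_step_measure_def)

lemma space_unif_step_measure [simp]: "space (unif_step_measure N K TL TR x) = space (see_space N)"
  by (simp add: unif_step_measure_def)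

lemma emeasure_unif_step_measure:
  assumes N: "0 < N" and x: "x \<in> space (see_space N)" and A: "A \<in> sets (see_space N)"
  shows "emeasure (unif_step_measure N K TL TR x) A = unif_step N K TL TR x A"
  unfolding unif_step_measure_def
proof (rule emeasure_measure_of_sigma[OF sets.sigma_algebra_axioms _ _ A])
  show "positive (sets (see_space N)) (unif_step N K TL TR x)"
    by (simp add: positive_def unif_step_def jump_rate_kernel_def)
  show "countably_additive (sets (see_space N)) (unif_step N K TL TR x)"
    by (rule countably_additive_cong[OF _ unif_step_eq[OF N x, symmetric]])
      (intro countably_additive_add countably_additive_divide countably_additive_sum
        countably_additive_cmult countably_additive_emeasure; simp add: bond_law_def left_law_def right_law_def)
qed

lemma unif_step_ge_bond:
  assumes N: "0 < N" and x: "x \<in> space (see_space N)" and A: "A \<in> sets (see_space N)"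
    and i: "Suc i < N"
  shows "ennreal (see_rate K (x i) (x (Suc i))) / ennreal (unif_const N K) * emeasure (bond_law N i x) A
    \<le> unif_step N K TL TR x A"
proof -
  let ?b = "\<lambda>i. ennreal (see_rate K (x i) (x (Suc i))) * emeasure (bond_law N i x) A"
  have "?b i \<le> (\<Sum>i<N - 1. ?b i)"
    using i by (intro member_le_sum) auto
  also have "\<dots> \<le> (\<Sum>i<N - 1. ?b i)
      + ennreal (see_rate K TL (x 0)) * emeasure (left_law N TL x) A
      + ennreal (see_rate K (x (N - 1)) TR) * emeasure (right_law N TR x) A"
    by (simp add: add.assoc)
  finally have "?b i / ennreal (unif_const N K) \<le> unif_step N K TL TR x A"
    unfolding unif_step_eq[OF N x A] by (rule add_increasing2[OF zero_le divide_right_mono_ennreal])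
  then show ?thesis by (simp add: ennreal_times_divide mult.commute)
qed

lemma unif_step_ge_right:
  assumes N: "0 < N" and x: "x \<in> space (see_space N)" and A: "A \<in> sets (see_space N)"
  shows "ennreal (see_rate K (x (N - 1)) TR) / ennreal (unif_const N K) * emeasure (right_law N TR x) A
    \<le> unif_step N K TL TR x A"
proof -
  have "ennreal (see_rate K (x (N - 1)) TR) * emeasure (right_law N TR x) A / ennreal (unif_const N K)
      \<le> unif_step N K TL TR x A"
    unfolding unif_step_eq[OF N x A]
    by (rule add_increasing2[OF zero_le divide_right_mono_ennreal]) (simp add: add_increasing)
  then show ?thesis by (simp add: ennreal_times_divide mult.commute)
qed

lemma nn_integral_unif_step_ge_bond:
  assumes N: "0 < N" and x: "x \<in> space (see_space N)" and i: "Suc i < N"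
    and G: "G \<in> borel_measurable (see_space N)"
  shows "ennreal (see_rate K (x i) (x (Suc i))) / ennreal (unif_const N K)
      * (\<integral>\<^sup>+p. G (bond_move i p x) \<partial>unif01)
    \<le> (\<integral>\<^sup>+y. G y \<partial>unif_step_measure N K TL TR x)"
proof -
  have "(\<integral>\<^sup>+p. G (bond_move i p x) \<partial>unif01) = (\<integral>\<^sup>+y. G y \<partial>bond_law N i x)"
    unfolding bond_law_def using G by (simp add: nn_integral_distr measurable_bond_move_slice[OF i x])
  moreover have "ennreal (see_rate K (x i) (x (Suc i))) / ennreal (unif_const N K)
      * (\<integral>\<^sup>+y. G y \<partial>bond_law N i x) \<le> (\<integral>\<^sup>+y. G y \<partial>unif_step_measure N K TL TR x)"
    by (rule nn_integral_scaled_le)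
      (use G unif_step_ge_bond[OF N x _ i] emeasure_unif_step_measure[OF N x] in \<open>simp_all add: bond_law_def\<close>)
  ultimately show ?thesis by simp
qed

lemma nn_integral_unif_step_ge_right:
  assumes N: "0 < N" and x: "x \<in> space (see_space N)" and G: "G \<in> borel_measurable (see_space N)"
  shows "ennreal (see_rate K (x (N - 1)) TR) / ennreal (unif_const N K)
      * (\<integral>\<^sup>+w. G (right_move N (fst w) (snd w) x) \<partial>(unif01 \<Otimes>\<^sub>M expo TR))
    \<le> (\<integral>\<^sup>+y. G y \<partial>unif_step_measure N K TL TR x)"
proof -
  have "(\<integral>\<^sup>+w. G (right_move N (fst w) (snd w) x) \<partial>(unif01 \<Otimes>\<^sub>M expo TR)) = (\<integral>\<^sup>+y. G y \<partial>right_law N TR x)"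
    unfolding right_law_def using G by (simp add: nn_integral_distr measurable_right_move_slice[OF N x])
  moreover have "ennreal (see_rate K (x (N - 1)) TR) / ennreal (unif_const N K)
      * (\<integral>\<^sup>+y. G y \<partial>right_law N TR x) \<le> (\<integral>\<^sup>+y. G y \<partial>unif_step_measure N K TL TR x)"
    by (rule nn_integral_scaled_le)
      (use G unif_step_ge_right[OF N x] emeasure_unif_step_measure[OF N x] in \<open>simp_all add: right_law_def\<close>)
  ultimately show ?thesis by simp
qed

section \<open>Prescribed move sequences\<close>

datatype move = Bond nat | Inject_right

text \<open>The part of \<open>Q\<^sup>k \<phi> x\<close>, \<open>k = length ms\<close>, contributed by the paths making exactly the
  moves \<open>ms\<close> in this order (\<open>Inject_right\<close> is an exchange with the right reservoir).\<close>

fun move_seq_kernel ::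
  "nat \<Rightarrow> real \<Rightarrow> real \<Rightarrow> move list \<Rightarrow> ((nat \<Rightarrow> real) \<Rightarrow> ennreal) \<Rightarrow> (nat \<Rightarrow> real) \<Rightarrow> ennreal" where
  "move_seq_kernel N K TR [] \<phi> x = \<phi> x"
| "move_seq_kernel N K TR (Bond i # ms) \<phi> x =
    ennreal (see_rate K (x i) (x (Suc i))) / ennreal (unif_const N K)
    * (\<integral>\<^sup>+p. move_seq_kernel N K TR ms \<phi> (bond_move i p x) \<partial>unif01)"
| "move_seq_kernel N K TR (Inject_right # ms) \<phi> x =
    ennreal (see_rate K (x (N - 1)) TR) / ennreal (unif_const N K)
    * (\<integral>\<^sup>+w. move_seq_kernel N K TR ms \<phi> (right_move N (fst w) (snd w) x) \<partial>(unif01 \<Otimes>\<^sub>M expo TR))"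

definition admissible_moves :: "nat \<Rightarrow> move list \<Rightarrow> bool" where
  "admissible_moves N ms \<longleftrightarrow> (\<forall>i. Bond i \<in> set ms \<longrightarrow> Suc i < N)"

lemma move_seq_kernel_append:
  "move_seq_kernel N K TR (ms @ ms') \<phi> x = move_seq_kernel N K TR ms (move_seq_kernel N K TR ms' \<phi>) x"
proof (induction ms arbitrary: x)
  case (Cons m ms)
  then show ?case by (cases m) simp_all
qed simp

lemma measurable_move_seq_kernel:
  assumes N: "0 < N" and TR: "0 < TR" and \<phi>: "\<phi> \<in> borel_measurable (see_space N)"
  shows "admissible_moves N ms \<Longrightarrow> move_seq_kernel N K TR ms \<phi> \<in> borel_measurable (see_space N)"
proof (induction ms)
  case Nil
  with \<phi> show ?case by (simp add: fun_eq_iff[symmetric])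
next
  case (Cons m ms)
  then have IH: "move_seq_kernel N K TR ms \<phi> \<in> borel_measurable (see_space N)"
    by (simp add: admissible_moves_def)
  show ?case
  proof (cases m)
    case (Bond i)
    with Cons.prems have i: "Suc i < N" by (simp add: admissible_moves_def)
    interpret U: prob_space unif01 by (rule prob_space_unif01)
    have "case_prod (\<lambda>x p. move_seq_kernel N K TR ms \<phi> (bond_move i p x))
        \<in> borel_measurable (see_space N \<Otimes>\<^sub>M unif01)"
      using measurable_compose[OF measurable_bond_move[OF i] IH]
      by (simp add: case_prod_beta' cong: measurable_cong_sets)
    then have "(\<lambda>x. \<integral>\<^sup>+p. move_seq_kernel N K TR ms \<phi> (bond_move i p x) \<partial>unif01)
        \<in> borel_measurable (see_space N)"
      by (rule U.borel_measurable_nn_integral)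
    then show ?thesis
      using Bond i measurable_see_rate[of i N "Suc i" K "ennreal (unif_const N K)"]
      by (simp add: fun_eq_iff[symmetric])
  next
    case Inject_right
    interpret P: prob_space "unif01 \<Otimes>\<^sub>M expo TR" by (rule prob_space_unif01_expo[OF TR])
    have "case_prod (\<lambda>x w. move_seq_kernel N K TR ms \<phi> (right_move N (fst w) (snd w) x))
        \<in> borel_measurable (see_space N \<Otimes>\<^sub>M (unif01 \<Otimes>\<^sub>M expo TR))"
      using measurable_compose[OF measurable_reservoir_move[of "N - 1" N] IH] N
      by (simp add: right_move_def case_prod_beta' cong: measurable_cong_sets)
    then have "(\<lambda>x. \<integral>\<^sup>+w. move_seq_kernel N K TR ms \<phi> (right_move N (fst w) (snd w) x) \<partial>(unif01 \<Otimes>\<^sub>M expo TR))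
        \<in> borel_measurable (see_space N)"
      by (rule P.borel_measurable_nn_integral)
    then show ?thesis
      using Inject_right N measurable_see_rate_right[of "N - 1" N K TR "ennreal (unif_const N K)"]
      by (simp add: fun_eq_iff[symmetric])
  qed
qed

lemma move_seq_kernel_le_unif_iter:
  assumes N: "0 < N" and TR: "0 < TR" and A: "A \<in> sets (see_space N)"
  shows "admissible_moves N ms \<Longrightarrow> x \<in> space (see_space N)
    \<Longrightarrow> move_seq_kernel N K TR ms (indicator A) x \<le> unif_iter N K TL TR (length ms) x A"
proof (induction ms arbitrary: x)
  case (Cons m ms)
  then have ms: "admissible_moves N ms" by (simp add: admissible_moves_def)
  have G: "move_seq_kernel N K TR ms (indicator A) \<in> borel_measurable (see_space N)"
    using A by (intro measurable_move_seq_kernel[OF N TR _ ms]) simp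
  have "(\<integral>\<^sup>+y. move_seq_kernel N K TR ms (indicator A) y \<partial>unif_step_measure N K TL TR x)
      \<le> unif_iter N K TL TR (length (m # ms)) x A"
    unfolding unif_iter.simps length_Cons by (intro nn_integral_mono) (use Cons.IH[OF ms] in simp)
  moreover have "move_seq_kernel N K TR (m # ms) (indicator A) x
      \<le> (\<integral>\<^sup>+y. move_seq_kernel N K TR ms (indicator A) y \<partial>unif_step_measure N K TL TR x)"
    using Cons.prems nn_integral_unif_step_ge_bond[OF N _ _ G] nn_integral_unif_step_ge_right[OF N _ G]
    by (cases m) (auto simp: admissible_moves_def)
  ultimately show ?case by (rule order_trans[rotated])
qed simp

section \<open>Sweeps of reservoir energy to a prescribed site\<close>

lemma emeasure_unif01: "E \<in> sets borel \<Longrightarrow> E \<subseteq> {0<..<1} \<Longrightarrow> emeasure unif01 E = emeasure lborel E"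
  unfolding unif01_def by (subst emeasure_uniform_measure) (auto simp: Int_absorb1 divide_ennreal_def)

lemma nn_integral_unif01_pos_of_scaled_hit:
  fixes U M :: real
  assumes T: "T \<in> sets borel" and pos: "0 < emeasure lborel (T \<inter> {0<..<M})" and MU: "M \<le> U"
    and g: "g \<in> borel_measurable borel" and g_pos: "\<And>p. 0 < p \<Longrightarrow> p < 1 \<Longrightarrow> p * U \<in> T \<Longrightarrow> 0 < g p"
  shows "0 < (\<integral>\<^sup>+p. g p \<partial>unif01)"
proof (rule nn_integral_pos_of_pos_on)
  let ?E = "{p \<in> {0<..<1}. p * U \<in> T}"
  have E: "?E \<in> sets borel" using T by measurable
  then show "?E \<in> sets unif01" by simp
  show "0 < emeasure unif01 ?E"
    using emeasure_scaled_hit_pos[OF T pos MU] E by (subst emeasure_unif01) auto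
qed (use g g_pos in auto)

lemma emeasure_expo_tail_pos:
  assumes "0 < T" shows "0 < emeasure (expo T) {a<..}"
proof -
  let ?b = "max a 0"
  have "emeasure lborel {?b<..<?b + 1} \<le> emeasure lborel {?b<..}"
    by (intro emeasure_mono) auto
  then have "0 < emeasure lborel {?b<..}" by (simp add: less_le_trans[of 0 1])
  then have "0 < (\<integral>\<^sup>+x. ennreal (exponential_density (1 / T) x) * indicator {a<..} x \<partial>lborel)"
    using assms by (intro nn_integral_pos_of_pos_on[where E="{?b<..}"]) (auto simp: exponential_density_def)
  then show ?thesis unfolding expo_def by (subst emeasure_density) simp_all
qed

lemma nn_integral_unif01_expo_pos:
  assumes T: "0 < T" and f: "f \<in> borel_measurable (unif01 \<Otimes>\<^sub>M expo T)"
    and pos: "\<And>X. a < X \<Longrightarrow> 0 < (\<integral>\<^sup>+p. f (p, X) \<partial>unif01)"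
  shows "0 < (\<integral>\<^sup>+w. f w \<partial>(unif01 \<Otimes>\<^sub>M expo T))"
proof -
  interpret U: prob_space unif01 by (rule prob_space_unif01)
  interpret E: prob_space "expo T"
    unfolding expo_def using T by (intro prob_space_exponential_density) simp
  interpret P: pair_sigma_finite unif01 "expo T" ..
  have "(\<lambda>X. \<integral>\<^sup>+p. f (p, X) \<partial>unif01) \<in> borel_measurable (expo T)"
    using U.borel_measurable_nn_integral_fst[OF measurable_pair_swap[OF f]] by simp
  then have "0 < (\<integral>\<^sup>+X. (\<integral>\<^sup>+p. f (p, X) \<partial>unif01) \<partial>expo T)"
    using pos emeasure_expo_tail_pos[OF T, of a] by (auto intro: nn_integral_pos_of_pos_on[where E="{a<..}"])
  also have "\<dots> = (\<integral>\<^sup>+w. f w \<partial>(unif01 \<Otimes>\<^sub>M expo T))"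
    by (rule P.nn_integral_snd[OF f])
  finally show ?thesis .
qed

text \<open>The energies which, carried at site \<open>j + d\<close>, let the remaining \<open>d\<close> bond moves of a sweep
  deposit an energy in \<open>B\<close> at site \<open>j\<close>; a bond move with \<open>p > 1/2\<close> passes on more than half.\<close>

definition sweep_target :: "real set \<Rightarrow> real \<Rightarrow> nat \<Rightarrow> real set" where
  "sweep_target B M d = (if d = 0 then B else {2 ^ (d - 1) * M<..})"

lemma sweep_target_hit_pos:
  assumes B: "B \<in> sets borel" and M: "0 < M" "0 < emeasure lborel (B \<inter> {0<..<M})"
  shows "sweep_target B M d \<in> sets borel"
    and "0 < emeasure lborel (sweep_target B M d \<inter> {0<..<2 ^ d * M})"
proof -
  show "sweep_target B M d \<in> sets borel"
    using B by (simp add: sweep_target_def)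
  show "0 < emeasure lborel (sweep_target B M d \<inter> {0<..<2 ^ d * M})"
  proof (cases d)
    case (Suc e)
    have "sweep_target B M d \<inter> {0<..<2 ^ d * M} = {2 ^ e * M<..<2 ^ d * M}"
      using M(1) Suc by (auto simp: sweep_target_def)
    then show ?thesis using M(1) Suc by simp
  qed (use M in \<open>simp add: sweep_target_def\<close>)
qed

fun bond_sweep :: "nat \<Rightarrow> nat \<Rightarrow> move list" where
  "bond_sweep j 0 = []"
| "bond_sweep j (Suc d) = Bond (j + d) # bond_sweep j d"

lemma admissible_bond_sweep: "j + d < N \<Longrightarrow> admissible_moves N (bond_sweep j d)"
  by (induction d) (auto simp: admissible_moves_def)

context
  fixes N :: nat and K TR M :: real and B :: "real set"
    and j :: nat and y :: "nat \<Rightarrow> real" and \<phi> :: "(nat \<Rightarrow> real) \<Rightarrow> ennreal"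
  assumes N: "0 < N" and K: "0 < K" and TR: "0 < TR"
    and B: "B \<in> sets borel" and M: "0 < M" "0 < emeasure lborel (B \<inter> {0<..<M})"
    and \<phi>: "\<phi> \<in> borel_measurable (see_space N)"
    and \<phi>_pos: "\<And>z. z \<in> see_orthant N \<Longrightarrow> (\<forall>i<j. z i = y i) \<Longrightarrow> z j \<in> B \<Longrightarrow> 0 < \<phi> z"
begin

lemma bond_sweep_pos:
  "j + d < N \<Longrightarrow> w \<in> see_orthant N \<Longrightarrow> (\<forall>i<j. w i = y i) \<Longrightarrow> w (j + d) \<in> sweep_target B M d
    \<Longrightarrow> 0 < move_seq_kernel N K TR (bond_sweep j d) \<phi> w"
proof (induction d arbitrary: w)
  case 0
  then show ?case using \<phi>_pos by (simp add: sweep_target_def)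
next
  case (Suc d)
  let ?k = "j + d"
  have k: "Suc ?k < N" using Suc.prems(1) by simp
  have w_pos: "0 < w ?k" "0 < w (Suc ?k)"
    using Suc.prems(2) k by (auto simp: mem_see_orthant_iff)
  have large: "2 ^ d * M \<le> w ?k + w (Suc ?k)"
    using Suc.prems(4) w_pos by (simp add: sweep_target_def)
  have G: "move_seq_kernel N K TR (bond_sweep j d) \<phi> \<in> borel_measurable (see_space N)"
    using k by (intro measurable_move_seq_kernel[OF N TR \<phi>] admissible_bond_sweep) simp
  have "0 < (\<integral>\<^sup>+p. move_seq_kernel N K TR (bond_sweep j d) \<phi> (bond_move ?k p w) \<partial>unif01)"
  proof (rule nn_integral_unif01_pos_of_scaled_hit[OF sweep_target_hit_pos[OF B M] large])
    show "(\<lambda>p. move_seq_kernel N K TR (bond_sweep j d) \<phi> (bond_move ?k p w)) \<in> borel_measurable borel"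
      using measurable_compose[OF measurable_bond_move_slice[OF k] G] Suc.prems(2) see_orthant_subset_space
      by (auto cong: measurable_cong_sets)
    fix p :: real assume p: "0 < p" "p < 1" "p * (w ?k + w (Suc ?k)) \<in> sweep_target B M d"
    show "0 < move_seq_kernel N K TR (bond_sweep j d) \<phi> (bond_move ?k p w)"
      using Suc.prems(1,3) p k
      by (intro Suc.IH bond_move_in_see_orthant[OF Suc.prems(2)]) (auto simp: bond_move_def)
  qed
  moreover have "0 < ennreal (see_rate K (w ?k) (w (Suc ?k))) / ennreal (unif_const N K)"
    using K w_pos by (rule see_rate_ratio_pos)
  ultimately show ?case by (simp add: ennreal_zero_less_mult_iff)
qed

lemma inject_sweep_pos:
  assumes j: "j < N" and y: "y \<in> see_orthant N"
  shows "0 < move_seq_kernel N K TR (Inject_right # bond_sweep j (N - 1 - j)) \<phi> y"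
proof -
  let ?d = "N - 1 - j"
  let ?G = "move_seq_kernel N K TR (bond_sweep j ?d) \<phi>"
  have y_space: "y \<in> space (see_space N)" using y see_orthant_subset_space by auto
  have y_pos: "0 < y (N - 1)" using y N by (simp add: mem_see_orthant_iff)
  have G: "?G \<in> borel_measurable (see_space N)"
    using j by (intro measurable_move_seq_kernel[OF N TR \<phi>] admissible_bond_sweep) simp
  have G_right: "(\<lambda>w. ?G (right_move N (fst w) (snd w) y)) \<in> borel_measurable (unif01 \<Otimes>\<^sub>M expo TR)"
    by (rule measurable_compose[OF measurable_right_move_slice[OF N y_space] G])
  have "0 < (\<integral>\<^sup>+w. ?G (right_move N (fst w) (snd w) y) \<partial>(unif01 \<Otimes>\<^sub>M expo TR))"
  proof (rule nn_integral_unif01_expo_pos[OF TR G_right, where a="2 ^ ?d * M"])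
    fix X assume X: "2 ^ ?d * M < X"
    have "0 < 2 ^ ?d * M" using M(1) by simp
    with X have X_pos: "0 \<le> X" by simp
    have large: "2 ^ ?d * M \<le> y (N - 1) + X" using X y_pos by simp
    show "0 < (\<integral>\<^sup>+p. ?G (right_move N (fst (p, X)) (snd (p, X)) y) \<partial>unif01)"
    proof (rule nn_integral_unif01_pos_of_scaled_hit[OF sweep_target_hit_pos[OF B M] large])
      show "(\<lambda>p. ?G (right_move N (fst (p, X)) (snd (p, X)) y)) \<in> borel_measurable borel"
        using measurable_compose[OF measurable_Pair2' G_right, of X]
        by (simp cong: measurable_cong_sets)
      fix p :: real assume p: "0 < p" "p < 1" "p * (y (N - 1) + X) \<in> sweep_target B M ?d"
      show "0 < ?G (right_move N (fst (p, X)) (snd (p, X)) y)"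
        using p j X_pos
        by (intro bond_sweep_pos right_move_in_see_orthant[OF y N]) (auto simp: right_move_def)
    qed
  qed
  moreover have "0 < ennreal (see_rate K (y (N - 1)) TR) / ennreal (unif_const N K)"
    using K y_pos TR by (rule see_rate_ratio_pos)
  ultimately show ?thesis by (simp add: ennreal_zero_less_mult_iff)
qed

end

section \<open>Sections of the target set\<close>

definition override_prefix :: "nat \<Rightarrow> (nat \<Rightarrow> real) \<Rightarrow> (nat \<Rightarrow> real) \<Rightarrow> (nat \<Rightarrow> real)" where
  "override_prefix j y t = (\<lambda>i. if i < j then y i else t i)"

definition section_measure :: "nat \<Rightarrow> (nat \<Rightarrow> real) set \<Rightarrow> nat \<Rightarrow> (nat \<Rightarrow> real) \<Rightarrow> ennreal" where
  "section_measure N A j y = (\<integral>\<^sup>+t. indicator A (override_prefix j y t) \<partial>PiM {j..<N} (\<lambda>_. lborel))"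

lemma override_prefix_Suc_fun_upd: "override_prefix (Suc j) (y(j := s)) t = override_prefix j y (t(j := s))"
  by (auto simp: override_prefix_def)

lemma measurable_override_prefix:
  assumes "j \<le> N"
  shows "override_prefix j y \<in> measurable (PiM {j..<N} (\<lambda>_. lborel)) (see_space N)"
proof (rule measurable_into_see_space)
  fix k assume "k < N"
  then have "k \<notin> {j..<N} \<Longrightarrow> k < j" by simp
  then show "(\<lambda>t. override_prefix j y t k) \<in> borel_measurable (PiM {j..<N} (\<lambda>_. lborel))"
    using measurable_component_singleton[of k "{j..<N}" "\<lambda>_. lborel"]
    by (cases "k \<in> {j..<N}") (auto simp: override_prefix_def)
qed (use assms in \<open>auto simp: override_prefix_def space_PiM PiE_def extensional_def\<close>)

lemma section_measure_0:
  "A \<in> sets (see_space N) \<Longrightarrow> section_measure N A 0 y = emeasure (see_space N) A"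
  unfolding section_measure_def see_space_def by (simp add: override_prefix_def atLeast0LessThan)

lemma section_measure_full: "y \<in> see_orthant N \<Longrightarrow> section_measure N A N y = indicator A y"
proof -
  interpret product_sigma_finite "\<lambda>_::nat. lborel :: real measure" ..
  assume "y \<in> see_orthant N"
  then have "override_prefix N y (\<lambda>_. undefined) = y"
    by (auto simp: override_prefix_def mem_see_orthant_iff fun_eq_iff)
  then show ?thesis by (simp add: section_measure_def nn_integral_empty)
qed

lemma measurable_override_prefix_fun_upd:
  assumes "j < N" and "A \<in> sets (see_space N)"
  shows "(\<lambda>(s, t). indicator A (override_prefix j y (t(j := s))) :: ennreal)
    \<in> borel_measurable (borel \<Otimes>\<^sub>M PiM {Suc j..<N} (\<lambda>_. lborel))"
proof -
  have "insert j {Suc j..<N} = {j..<N}" using assms(1) by auto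
  then have "(\<lambda>(t, s). t(j := s)) \<in> measurable (PiM {Suc j..<N} (\<lambda>_. lborel) \<Otimes>\<^sub>M lborel) (PiM {j..<N} (\<lambda>_. lborel))"
    using measurable_add_dim[of j "{Suc j..<N}" "\<lambda>_. lborel"] by simp
  from measurable_compose[OF measurable_pair_swap[OF this] measurable_override_prefix] assms
  show ?thesis by (simp add: case_prod_beta' cong: measurable_cong_sets)
qed

lemma section_measure_Suc:
  assumes j: "j < N" and A: "A \<in> sets (see_space N)"
  shows "section_measure N A j y = (\<integral>\<^sup>+s. section_measure N A (Suc j) (y(j := s)) \<partial>lborel)"
proof -
  interpret product_sigma_finite "\<lambda>_::nat. lborel :: real measure" ..
  have ins: "{j..<N} = insert j {Suc j..<N}" using j by auto
  have f: "(\<lambda>t. indicator A (override_prefix j y t) :: ennreal) \<in> borel_measurable (PiM (insert j {Suc j..<N}) (\<lambda>_. lborel))"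
    using measurable_compose[OF measurable_override_prefix[of j N y] borel_measurable_indicator[OF A]] j ins by simp
  show ?thesis
    unfolding section_measure_def override_prefix_Suc_fun_upd ins
    by (rule product_nn_integral_insert_rev[OF _ _ f]) auto
qed

lemma measurable_section_measure_Suc:
  assumes j: "j < N" and A: "A \<in> sets (see_space N)"
  shows "(\<lambda>s. section_measure N A (Suc j) (y(j := s))) \<in> borel_measurable borel"
proof -
  interpret finite_product_sigma_finite "\<lambda>_. lborel :: real measure" "{Suc j..<N}" by standard simp
  show ?thesis
    unfolding section_measure_def override_prefix_Suc_fun_upd
    using measurable_override_prefix_fun_upd[OF j A] by (rule borel_measurable_nn_integral)
qed

lemma section_measure_Suc_pos_imp_pos:
  assumes A: "A \<subseteq> see_orthant N" and j: "j < N" and pos: "0 < section_measure N A (Suc j) (y(j := s))"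
  shows "0 < s"
proof (rule ccontr)
  assume "\<not> 0 < s"
  have "override_prefix (Suc j) (y(j := s)) t \<notin> A" for t
  proof
    assume "override_prefix (Suc j) (y(j := s)) t \<in> A"
    then have "0 < override_prefix (Suc j) (y(j := s)) t j"
      using A j by (auto simp: mem_see_orthant_iff)
    with \<open>\<not> 0 < s\<close> show False by (simp add: override_prefix_def)
  qed
  then have "section_measure N A (Suc j) (y(j := s)) = 0"
    by (simp add: section_measure_def)
  with pos show False by simp
qed

lemma section_measure_Suc_prefix:
  assumes "\<forall>i<j. z i = y i"
  shows "section_measure N A (Suc j) z = section_measure N A (Suc j) (y(j := z j))"
proof -
  have "override_prefix (Suc j) z t = override_prefix (Suc j) (y(j := z j)) t" for t
    using assms by (auto simp: override_prefix_def less_Suc_eq)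
  then show ?thesis by (simp add: section_measure_def)
qed

lemma section_measure_pos_coordinates:
  assumes j: "j < N" and A: "A \<in> sets (see_space N)" "A \<subseteq> see_orthant N"
    and pos: "0 < section_measure N A j y"
  defines "B \<equiv> {s. 0 < section_measure N A (Suc j) (y(j := s))}"
  shows "B \<in> sets borel" and "B \<subseteq> {0<..}" and "0 < emeasure lborel B"
proof -
  let ?h = "\<lambda>s. section_measure N A (Suc j) (y(j := s))"
  have h: "?h \<in> borel_measurable borel"
    by (rule measurable_section_measure_Suc[OF j A(1)])
  then show B: "B \<in> sets borel"
    unfolding B_def using measurable_sets_borel[OF h, of "{0<..}"] by (simp add: vimage_def)
  show "B \<subseteq> {0<..}"
    using section_measure_Suc_pos_imp_pos[OF A(2) j] by (auto simp: B_def)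
  show "0 < emeasure lborel B"
  proof (rule ccontr)
    assume "\<not> 0 < emeasure lborel B"
    then have "(\<integral>\<^sup>+s. ?h s \<partial>lborel) = 0"
      using h by (subst nn_integral_0_iff) (auto simp: B_def zero_less_iff_neq_zero)
    with pos show False by (simp add: section_measure_Suc[OF j A(1)])
  qed
qed

fun sweeps :: "nat \<Rightarrow> nat \<Rightarrow> move list" where
  "sweeps N 0 = []"
| "sweeps N (Suc d) = Inject_right # bond_sweep (N - Suc d) d @ sweeps N d"

lemma admissible_sweeps: "d \<le> N \<Longrightarrow> admissible_moves N (sweeps N d)"
proof (induction d)
  case (Suc d)
  then have "admissible_moves N (bond_sweep (N - Suc d) d)"
    by (intro admissible_bond_sweep) simp
  with Suc show ?case by (simp add: admissible_moves_def)
qed (simp add: admissible_moves_def)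

lemma sweeps_pos:
  assumes N: "0 < N" and K: "0 < K" and TR: "0 < TR"
    and A: "A \<in> sets (see_space N)" "A \<subseteq> see_orthant N"
  shows "d \<le> N \<Longrightarrow> y \<in> see_orthant N \<Longrightarrow> 0 < section_measure N A (N - d) y
    \<Longrightarrow> 0 < move_seq_kernel N K TR (sweeps N d) (indicator A) y"
proof (induction d arbitrary: y)
  case 0
  then show ?case by (simp add: section_measure_full)
next
  case (Suc d)
  define j where "j = N - Suc d"
  have j: "j < N" "Suc j = N - d" "N - 1 - j = d"
    using Suc.prems(1) N by (auto simp: j_def)
  have pos: "0 < section_measure N A j y" using Suc.prems(3) by (simp add: j_def)
  define B where "B = {s. 0 < section_measure N A (Suc j) (y(j := s))}"
  note B = section_measure_pos_coordinates[OF j(1) A pos, folded B_def]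
  obtain M where M: "0 < M" "0 < emeasure lborel (B \<inter> {0<..<M})"
    using exists_bounded_part_pos[OF B] by blast
  have \<phi>: "move_seq_kernel N K TR (sweeps N d) (indicator A) \<in> borel_measurable (see_space N)"
    using A(1) Suc.prems(1) by (intro measurable_move_seq_kernel[OF N TR] admissible_sweeps) simp_all
  have "0 < move_seq_kernel N K TR (Inject_right # bond_sweep j (N - 1 - j))
      (move_seq_kernel N K TR (sweeps N d) (indicator A)) y"
  proof (rule inject_sweep_pos[OF N K TR B(1) M \<phi> _ j(1) Suc.prems(2)])
    fix z assume z: "z \<in> see_orthant N" "\<forall>i<j. z i = y i" "z j \<in> B"
    then have "0 < section_measure N A (N - d) z"
      using section_measure_Suc_prefix[OF z(2)] j(2) by (simp add: B_def)
    with z(1) Suc.prems(1) show "0 < move_seq_kernel N K TR (sweeps N d) (indicator A) z"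
      by (intro Suc.IH) simp_all
  qed
  then show ?case unfolding j(3) by (simp add: move_seq_kernel_append j_def)
qed

lemma unif_iter_sweeps_pos:
  assumes N: "0 < N" and K: "0 < K" and TR: "0 < TR" and E0: "E0 \<in> see_orthant N"
    and A: "A \<in> sets (see_space N)" "A \<subseteq> see_orthant N" "0 < emeasure (see_space N) A"
  shows "0 < unif_iter N K TL TR (length (sweeps N N)) E0 A"
proof -
  have "0 < move_seq_kernel N K TR (sweeps N N) (indicator A) E0"
    using A by (intro sweeps_pos[OF N K TR A(1-2) order_refl E0]) (simp add: section_measure_0)
  also have "\<dots> \<le> unif_iter N K TL TR (length (sweeps N N)) E0 A"
    using E0 see_orthant_subset_space
    by (intro move_seq_kernel_le_unif_iter[OF N TR A(1) admissible_sweeps]) auto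
  finally show ?thesis .
qed

lemma see_kernel_pos_of_unif_iter_pos:
  assumes K: "0 < K" and t: "0 < t" and pos: "0 < unif_iter N K TL TR k x A"
  shows "0 < see_kernel N K TL TR t x A"
proof -
  let ?L = "unif_const N K"
  let ?f = "\<lambda>k. ennreal (exp (- ?L * t) * (?L * t) ^ k / fact k) * unif_iter N K TL TR k x A"
  have "0 < ?L" using K by (simp add: unif_const_def)
  then have "0 < ?f k" using t pos by (simp add: ennreal_zero_less_mult_iff)
  also have "?f k \<le> (\<Sum>k. ?f k)"
    using sum_le_suminf[OF summableI, of "{k}" ?f] by simp
  finally show ?thesis unfolding see_kernel_def .
qed

theorem corollary6p3:
  fixes N :: nat and TL TR :: real
  assumes "N \<ge> 1" and "TL > 0" and "TR > 0"
  shows "\<exists>K0. \<forall>K \<ge> K0. \<forall>h > 0. \<forall>E0 A.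
           E0 \<in> see_orthant N \<longrightarrow> A \<in> sets (see_space N) \<longrightarrow> A \<subseteq> see_orthant N \<longrightarrow>
           emeasure (see_space N) A > 0 \<longrightarrow>
           (\<exists>n \<ge> 1. see_kernel N K TL TR (real n * h) E0 A > 0)"
proof (intro exI[of _ "1::real"] allI impI)
  fix K h :: real and E0 A
  assume K: "1 \<le> K" and h: "0 < h" and "E0 \<in> see_orthant N" "A \<in> sets (see_space N)"
    "A \<subseteq> see_orthant N" "0 < emeasure (see_space N) A"
  then have "0 < unif_iter N K TL TR (length (sweeps N N)) E0 A"
    using assms by (intro unif_iter_sweeps_pos) simp_all
  then have "0 < see_kernel N K TL TR (real 1 * h) E0 A"
    using K h by (intro see_kernel_pos_of_unif_iter_pos) simp_all
  then show "\<exists>n \<ge> 1. see_kernel N K TL TR (real n * h) E0 A > 0" by blast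
qed

end
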